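(* If the set of control constraints $\mathcal{U}$ satisfies Putinar's condition, then so does the set $\mathcal{T}\cup\mathcal{B}\cup\mathcal{U}$ (as a set of polynomials in the variables $(t,x,u)$).
   Context: Fix $n\ge1$, $T>0$, $K\ge1$. Let $\mathcal{U}=\{q_1,\dots,q_r\}$ be real polynomials in $u\in\mathbb{R}^K$ such that $U=\{u:q(u)\ge0\ \forall q\in\mathcal{U}\}$ is compact. A Hermitian trace-one matrix $\rho\in\mathbb{C}^{n\times n}$ is represented by the real vector $x$ consisting of $\operatorname{Re}\rho_{ij}$ for $1\le i\le j\le n$ excluding $\operatorname{Re}\rho_{nn}$, and $\operatorname{Im}\rho_{ij}$ for $1\le i<j\le n$ (with $\rho_{nn}=1-\sum_{i<n}\rho_{ii}$, $\rho_{ji}=\overline{\rho_{ij}}$); in these coordinates $\operatorname{tr}\rho^2=(1-\sum_{i=1}^{n-1}\operatorname{Re}\rho_{ii})^2+\sum_{i=1}^{n-1}\operatorname{Re}\rho_{ii}^2+2\sum_{1\le i<j\le n}|\rho_{ij}|^2$. Set $\mathcal{T}=\{t,\ T-t\}$ (polynomials in $t$) and $\mathcal{B}=\{1-\operatorname{tr}\rho^2,\ \operatorname{tr}\rho^2-1\}$ (polynomials in $x$). For a finite set $\mathcal{S}=\{a_1,\dots,a_p\}$ of real polynomials in variables $y=(y_1,\dots,y_N)$, $Q_d[\mathcal{S}]=\{s_0+\sum_{i=1}^p s_ia_i: s_i \text{ sums of squares of real polynomials in } y,\ \deg(s_ia_i)\le d\}$. $\mathcal{S}$ satisfies Putinar's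 condition if there exists $M>0$ such that $M-\sum_{i=1}^N y_i^2\in Q_d[\mathcal{S}]$ for some $d$. *)

theory Defs
  imports "HOL-Library.Poly_Mapping" "HOL-Analysis.Analysis"
begin

type_synonym mpoly = "(nat \<Rightarrow>\<^sub>0 nat) \<Rightarrow>\<^sub>0 real"

definition Var :: "nat \<Rightarrow> mpoly" where
  "Var v = Poly_Mapping.single (Poly_Mapping.single v 1) 1"

definition Const :: "real \<Rightarrow> mpoly" where
  "Const c = Poly_Mapping.single 0 c"

definition tdeg :: "mpoly \<Rightarrow> nat" where
  "tdeg p = Max (insert 0 ((\<lambda>m. \<Sum>v\<in>Poly_Mapping.keys m. Poly_Mapping.lookup m v) ` Poly_Mapping.keys p))"

definition polys_in :: "nat set \<Rightarrow> mpoly set" where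
  "polys_in V = {p. \<forall>m\<in>Poly_Mapping.keys p. Poly_Mapping.keys m \<subseteq> V}"

definition peval :: "mpoly \<Rightarrow> (nat \<Rightarrow> real) \<Rightarrow> real" where
  "peval p a = (\<Sum>m\<in>Poly_Mapping.keys p. Poly_Mapping.lookup p m * (\<Prod>v\<in>Poly_Mapping.keys m. a v ^ Poly_Mapping.lookup m v))"

definition sos :: "nat set \<Rightarrow> mpoly \<Rightarrow> bool" where
  "sos V s \<longleftrightarrow> (\<exists>gs. set gs \<subseteq> polys_in V \<and> s = sum_list (map (\<lambda>g. g * g) gs))"

text \<open>truncated quadratic module Q_d[S] in the variables V (S finite)\<close>
definition quadmod :: "nat set \<Rightarrow> nat \<Rightarrow> mpoly set \<Rightarrow> mpoly set" where
  "quadmod V d S = {p. \<exists>s0 s. sos V s0 \<and> tdeg s0 \<le> d \<and>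
      (\<forall>a\<in>S. sos V (s a) \<and> tdeg (s a * a) \<le> d) \<and>
      p = s0 + (\<Sum>a\<in>S. s a * a)}"

definition putinar :: "nat set \<Rightarrow> mpoly set \<Rightarrow> bool" where
  "putinar V S \<longleftrightarrow> (\<exists>M>0. \<exists>d. Const M - (\<Sum>v\<in>V. Var v * Var v) \<in> quadmod V d S)"

text \<open>Variable layout for (t, x, u): t is variable 0; for 0-based indices i \<le> j < n,
  (i,j) \<noteq> (n-1,n-1), Re rho_ij is variable 1 + i*n + j; for i < j < n, Im rho_ij is
  variable 1 + j*n + i; u_k (k < K) is variable n^2 + k.
  Hence the x-variables are exactly {1..<n^2} and the u-variables {n^2..<n^2+K}.\<close>

definition t_var :: nat where "t_var = 0"
definition re_var :: "nat \<Rightarrow> nat \<Rightarrow> nat \<Rightarrow> nat" where "re_var n i j = 1 + i * n + j"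
definition im_var :: "nat \<Rightarrow> nat \<Rightarrow> nat \<Rightarrow> nat" where "im_var n i j = 1 + j * n + i"

definition x_vars :: "nat \<Rightarrow> nat set" where
  "x_vars n = {re_var n i j | i j. i \<le> j \<and> j < n \<and> \<not> (i = n - 1 \<and> j = n - 1)}
            \<union> {im_var n i j | i j. i < j \<and> j < n}"

definition u_vars :: "nat \<Rightarrow> nat \<Rightarrow> nat set" where
  "u_vars n K = {n\<^sup>2 ..< n\<^sup>2 + K}"

definition all_vars :: "nat \<Rightarrow> nat \<Rightarrow> nat set" where
  "all_vars n K = {t_var} \<union> x_vars n \<union> u_vars n K"

text \<open>tr rho^2 in the coordinates x\<close>
definition trace_sq :: "nat \<Rightarrow> mpoly" where
  "trace_sq n =
     (1 - (\<Sum>i<n - 1. Var (re_var n i i)))^2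
     + (\<Sum>i<n - 1. (Var (re_var n i i))^2)
     + 2 * (\<Sum>j<n. \<Sum>i<j. (Var (re_var n i j))^2 + (Var (im_var n i j))^2)"

definition T_set :: "real \<Rightarrow> mpoly set" where
  "T_set T = {Var t_var, Const T - Var t_var}"

definition B_set :: "nat \<Rightarrow> mpoly set" where
  "B_set n = {1 - trace_sq n, trace_sq n - 1}"

end

theory Submission
  imports Defs
begin

text \<open>Putinar's condition in the variables \<open>V\<close> amounts to every single variable being
  bounded in the quadratic module, \<open>c - v\<^sup>2 \<in> Q(S)\<close> for some \<open>c\<close>: the bounds add up, and
  conversely the other squares may be added to a bound for the sum of squares.
  The \<open>u\<close>-variables are bounded by hypothesis. For \<open>t\<close> the generators \<open>t\<close> and \<open>T - t\<close> give
  \<open>T\<^sup>2 - t\<^sup>2 = T (T - t) + (t\<^sup>2 (T - t) + (T - t)\<^sup>2 t) / T\<close>. For a coordinate \<open>x\<close> of \<open>\<rho>\<close>,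
  \<open>1 - x\<^sup>2 = (1 - tr \<rho>\<^sup>2) + (tr \<rho>\<^sup>2 - x\<^sup>2)\<close>, where the second summand is a sum of squares
  because \<open>x\<^sup>2\<close> is one of the square terms of \<open>tr \<rho>\<^sup>2\<close>.\<close>

lemma polys_in_mono: "V \<subseteq> W \<Longrightarrow> polys_in V \<subseteq> polys_in W"
  unfolding polys_in_def by blast

lemma polys_in_add: "p \<in> polys_in V \<Longrightarrow> q \<in> polys_in V \<Longrightarrow> p + q \<in> polys_in V"
  unfolding polys_in_def using keys_add[of p q] by blast

lemma polys_in_diff: "p \<in> polys_in V \<Longrightarrow> q \<in> polys_in V \<Longrightarrow> p - q \<in> polys_in V"
  unfolding polys_in_def using keys_diff[of p q] by blast

lemma polys_in_mult:
  assumes "p \<in> polys_in V" "q \<in> polys_in V"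
  shows "p * q \<in> polys_in V"
  unfolding polys_in_def
proof (intro CollectI ballI)
  fix m assume "m \<in> Poly_Mapping.keys (p * q)"
  then obtain a b where "m = a + b" "a \<in> Poly_Mapping.keys p" "b \<in> Poly_Mapping.keys q"
    using keys_mult[of p q] by blast
  then show "Poly_Mapping.keys m \<subseteq> V"
    using assms keys_add[of a b] unfolding polys_in_def by blast
qed

lemma polys_in_sum:
  "finite I \<Longrightarrow> (\<And>i. i \<in> I \<Longrightarrow> f i \<in> polys_in V) \<Longrightarrow> (\<Sum>i\<in>I. f i) \<in> polys_in V"
proof (induction I rule: finite_induct)
  case empty
  show ?case by (simp add: polys_in_def)
next
  case insert
  then show ?case by (simp add: polys_in_add)
qed

lemma polys_in_Var: "v \<in> V \<Longrightarrow> Var v \<in> polys_in V"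
  unfolding polys_in_def Var_def by simp

lemma polys_in_Const: "Const c \<in> polys_in V"
  unfolding polys_in_def Const_def by simp

lemma Const_zero [simp]: "Const 0 = 0"
  unfolding Const_def by simp

lemma Const_one [simp]: "Const 1 = 1"
  unfolding Const_def by simp

lemma Const_add: "Const (a + b) = Const a + Const b"
  unfolding Const_def by (rule single_add)

lemma Const_diff: "Const (a - b) = Const a - Const b"
  unfolding Const_def by (rule single_diff)

lemma Const_mult: "Const (a * b) = Const a * Const b"
  unfolding Const_def by (simp add: mult_single)

lemma Const_sum: "Const (\<Sum>i\<in>I. f i) = (\<Sum>i\<in>I. Const (f i))"
  by (induction I rule: infinite_finite_induct) (simp_all add: Const_add)

lemma sos_mono:
  assumes "V \<subseteq> W" "sos V p"
  shows "sos W p"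
proof -
  obtain gs where "set gs \<subseteq> polys_in V" "p = sum_list (map (\<lambda>g. g * g) gs)"
    using assms(2) unfolding sos_def by blast
  then show ?thesis
    unfolding sos_def using polys_in_mono[OF assms(1)] by (intro exI[of _ gs]) auto
qed

lemma sos_zero: "sos V 0"
  unfolding sos_def by (rule exI[of _ "[]"]) simp

lemma sos_square: "g \<in> polys_in V \<Longrightarrow> sos V (g * g)"
  unfolding sos_def by (rule exI[of _ "[g]"]) simp

lemma sos_add:
  assumes "sos V p" "sos V q"
  shows "sos V (p + q)"
proof -
  obtain gs hs where "set gs \<subseteq> polys_in V" "p = sum_list (map (\<lambda>g. g * g) gs)"
    and "set hs \<subseteq> polys_in V" "q = sum_list (map (\<lambda>g. g * g) hs)"
    using assms unfolding sos_def by blast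
  then show ?thesis
    unfolding sos_def by (intro exI[of _ "gs @ hs"]) simp
qed

lemma sos_sum: "finite I \<Longrightarrow> (\<And>i. i \<in> I \<Longrightarrow> sos V (f i)) \<Longrightarrow> sos V (\<Sum>i\<in>I. f i)"
proof (induction I rule: finite_induct)
  case empty
  show ?case by (simp add: sos_zero)
next
  case insert
  then show ?case by (simp add: sos_add)
qed

lemma sos_sum_minus_term:
  assumes "finite I" "i \<in> I" "\<And>j. j \<in> I \<Longrightarrow> sos V (f j)"
  shows "sos V ((\<Sum>j\<in>I. f j) - f i)"
proof -
  have "(\<Sum>j\<in>I. f j) - f i = (\<Sum>j\<in>I - {i}. f j)"
    using assms(1,2) by (simp add: sum.remove)
  then show ?thesis using assms by (auto intro: sos_sum)
qed

lemma sos_Const: "c \<ge> 0 \<Longrightarrow> sos V (Const c)"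
  using sos_square[OF polys_in_Const, of V "sqrt c"] by (simp add: Const_mult[symmetric])

lemma tdeg_le_iff:
  "tdeg p \<le> k \<longleftrightarrow> (\<forall>m\<in>Poly_Mapping.keys p. (\<Sum>v\<in>Poly_Mapping.keys m. Poly_Mapping.lookup m v) \<le> k)"
  unfolding tdeg_def by (subst Max_le_iff) auto

lemma tdeg_zero [simp]: "tdeg 0 = 0"
  by (simp add: tdeg_def)

lemma tdeg_add: "tdeg (p + q) \<le> max (tdeg p) (tdeg q)"
  unfolding tdeg_le_iff
proof
  fix m assume "m \<in> Poly_Mapping.keys (p + q)"
  then have "m \<in> Poly_Mapping.keys p \<or> m \<in> Poly_Mapping.keys q"
    using keys_add[of p q] by blast
  then show "(\<Sum>v\<in>Poly_Mapping.keys m. Poly_Mapping.lookup m v) \<le> max (tdeg p) (tdeg q)"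
    using tdeg_le_iff[of p "tdeg p"] tdeg_le_iff[of q "tdeg q"] by (auto simp: le_max_iff_disj)
qed

lemma quadmod_mono:
  assumes "V \<subseteq> W" "d \<le> e" "S \<subseteq> S'" "finite S'"
  shows "quadmod V d S \<subseteq> quadmod W e S'"
proof
  fix p assume "p \<in> quadmod V d S"
  then obtain s0 s where s0: "sos V s0" "tdeg s0 \<le> d"
    and s: "\<forall>a\<in>S. sos V (s a) \<and> tdeg (s a * a) \<le> d"
    and p: "p = s0 + (\<Sum>a\<in>S. s a * a)"
    unfolding quadmod_def by blast
  define s' where "s' a = (if a \<in> S then s a else 0)" for a
  have "(\<Sum>a\<in>S'. s' a * a) = (\<Sum>a\<in>S. s a * a)"
    using assms(3,4) by (intro sum.mono_neutral_cong_right) (auto simp: s'_def)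
  then have "p = s0 + (\<Sum>a\<in>S'. s' a * a)"
    using p by simp
  moreover have "\<forall>a\<in>S'. sos W (s' a) \<and> tdeg (s' a * a) \<le> e"
    using s assms(1,2) by (auto simp: s'_def sos_zero intro: sos_mono)
  moreover have "sos W s0" "tdeg s0 \<le> e"
    using s0 assms(1,2) sos_mono by auto
  ultimately show "p \<in> quadmod W e S'"
    unfolding quadmod_def by blast
qed

lemma quadmod_add:
  assumes "p \<in> quadmod V d S" "q \<in> quadmod V d S"
  shows "p + q \<in> quadmod V d S"
proof -
  obtain s0 s where s0: "sos V s0" "tdeg s0 \<le> d"
    and s: "\<forall>a\<in>S. sos V (s a) \<and> tdeg (s a * a) \<le> d"
    and p: "p = s0 + (\<Sum>a\<in>S. s a * a)"
    using assms(1) unfolding quadmod_def by blast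
  obtain t0 t where t0: "sos V t0" "tdeg t0 \<le> d"
    and t: "\<forall>a\<in>S. sos V (t a) \<and> tdeg (t a * a) \<le> d"
    and q: "q = t0 + (\<Sum>a\<in>S. t a * a)"
    using assms(2) unfolding quadmod_def by blast
  have "(\<Sum>a\<in>S. (s a + t a) * a) = (\<Sum>a\<in>S. s a * a) + (\<Sum>a\<in>S. t a * a)"
    by (simp only: distrib_right sum.distrib)
  then have sum: "p + q = (s0 + t0) + (\<Sum>a\<in>S. (s a + t a) * a)"
    unfolding p q by (simp only: add_ac)
  have deg: "tdeg (s0 + t0) \<le> d"
    using tdeg_add[of s0 t0] s0 t0 by simp
  have st: "sos V (s a + t a) \<and> tdeg ((s a + t a) * a) \<le> d" if "a \<in> S" for a
  proof -
    have "sos V (s a)" "tdeg (s a * a) \<le> d" "sos V (t a)" "tdeg (t a * a) \<le> d"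
      using s t that by auto
    then show ?thesis
      using tdeg_add[of "s a * a" "t a * a"] by (simp add: distrib_right sos_add)
  qed
  show ?thesis
    unfolding quadmod_def
    by (intro CollectI exI[of _ "s0 + t0"] exI[of _ "\<lambda>a. s a + t a"] conjI ballI)
      (simp_all add: sos_add s0 t0 deg st sum)
qed

lemma quadmod_mono_degree: "d \<le> e \<Longrightarrow> quadmod V d S \<subseteq> quadmod V e S"
  unfolding quadmod_def by (intro Collect_mono impI) (blast intro: le_trans)

definition qmodule :: "nat set \<Rightarrow> mpoly set \<Rightarrow> mpoly set" where
  "qmodule V S = (\<Union>d. quadmod V d S)"

lemma putinar_iff_qmodule:
  "putinar V S \<longleftrightarrow> (\<exists>M>0. Const M - (\<Sum>v\<in>V. Var v * Var v) \<in> qmodule V S)"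
  unfolding putinar_def qmodule_def by simp

lemma qmodule_mono:
  assumes "V \<subseteq> W" "S \<subseteq> S'" "finite S'"
  shows "qmodule V S \<subseteq> qmodule W S'"
  unfolding qmodule_def using quadmod_mono[OF assms(1) order_refl assms(2,3)] by (intro UN_mono) auto

lemma qmodule_add:
  assumes "p \<in> qmodule V S" "q \<in> qmodule V S"
  shows "p + q \<in> qmodule V S"
proof -
  obtain d e where "p \<in> quadmod V d S" "q \<in> quadmod V e S"
    using assms unfolding qmodule_def by blast
  then have "p \<in> quadmod V (max d e) S" "q \<in> quadmod V (max d e) S"
    using quadmod_mono_degree[OF max.cobounded1] quadmod_mono_degree[OF max.cobounded2] by blast+
  then show ?thesis
    unfolding qmodule_def using quadmod_add by blast
qed

lemma sos_in_qmodule: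
  assumes "sos V p"
  shows "p \<in> qmodule V S"
proof -
  have "p \<in> quadmod V (tdeg p) S"
    unfolding quadmod_def using assms
    by (intro CollectI exI[of _ p] exI[of _ "\<lambda>_. 0"]) (simp add: sos_zero)
  then show ?thesis
    unfolding qmodule_def by blast
qed

lemma generator_in_qmodule:
  assumes "finite S" "a \<in> S" "sos V s"
  shows "s * a \<in> qmodule V S"
proof -
  define s' where "s' b = (if b = a then s else 0)" for b
  have "(\<Sum>b\<in>S. s' b * b) = (\<Sum>b\<in>S. if b = a then s * a else 0)"
    by (rule sum.cong) (simp_all add: s'_def)
  then have "(\<Sum>b\<in>S. s' b * b) = s * a"
    using assms(1,2) by simp
  moreover have "\<forall>b\<in>S. sos V (s' b) \<and> tdeg (s' b * b) \<le> tdeg (s * a)"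
    using assms(3) by (simp add: s'_def sos_zero)
  ultimately have "s * a \<in> quadmod V (tdeg (s * a)) S"
    unfolding quadmod_def by (intro CollectI exI[of _ 0] exI[of _ s']) (simp add: sos_zero)
  then show ?thesis
    unfolding qmodule_def by blast
qed

lemma qmodule_sum:
  "finite I \<Longrightarrow> (\<And>i. i \<in> I \<Longrightarrow> f i \<in> qmodule V S) \<Longrightarrow> (\<Sum>i\<in>I. f i) \<in> qmodule V S"
proof (induction I rule: finite_induct)
  case empty
  show ?case by (simp add: sos_in_qmodule sos_zero)
next
  case insert
  then show ?case by (simp add: qmodule_add)
qed

lemma putinar_iff_vars_bounded:
  assumes "finite V"
  shows "putinar V S \<longleftrightarrow> (\<forall>v\<in>V. \<exists>c. Const c - Var v * Var v \<in> qmodule V S)"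
proof
  assume "putinar V S"
  then obtain M where M: "Const M - (\<Sum>w\<in>V. Var w * Var w) \<in> qmodule V S"
    unfolding putinar_iff_qmodule by blast
  show "\<forall>v\<in>V. \<exists>c. Const c - Var v * Var v \<in> qmodule V S"
  proof
    fix v assume "v \<in> V"
    then have split: "Const M - Var v * Var v
        = (Const M - (\<Sum>w\<in>V. Var w * Var w)) + (\<Sum>w\<in>V - {v}. Var w * Var w)"
      using assms by (simp add: sum.remove)
    have "(\<Sum>w\<in>V - {v}. Var w * Var w) \<in> qmodule V S"
      using assms by (intro sos_in_qmodule sos_sum sos_square polys_in_Var) auto
    then have "Const M - Var v * Var v \<in> qmodule V S"
      unfolding split by (rule qmodule_add[OF M])
    then show "\<exists>c. Const c - Var v * Var v \<in> qmodule V S" ..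
  qed
next
  assume "\<forall>v\<in>V. \<exists>c. Const c - Var v * Var v \<in> qmodule V S"
  from bchoice[OF this] obtain c
    where c: "\<forall>v\<in>V. Const (c v) - Var v * Var v \<in> qmodule V S" ..
  define M where "M = 1 + (\<Sum>v\<in>V. \<bar>c v\<bar>)"
  have "M > 0"
    unfolding M_def by (simp add: add_pos_nonneg sum_nonneg)
  have summand: "Const (\<bar>c v\<bar>) - Var v * Var v \<in> qmodule V S" if "v \<in> V" for v
  proof -
    have "Const (\<bar>c v\<bar> - c v) \<in> qmodule V S"
      by (intro sos_in_qmodule sos_Const) simp
    then have "Const (\<bar>c v\<bar> - c v) + (Const (c v) - Var v * Var v) \<in> qmodule V S"
      using c that by (simp add: qmodule_add)
    then show ?thesis
      by (simp add: Const_diff)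
  qed
  have "Const M - (\<Sum>v\<in>V. Var v * Var v)
      = Const 1 + (\<Sum>v\<in>V. Const (\<bar>c v\<bar>) - Var v * Var v)"
    unfolding M_def Const_add Const_sum sum_subtractf by simp
  also have "\<dots> \<in> qmodule V S"
    using assms summand by (intro qmodule_add qmodule_sum[OF assms] sos_in_qmodule[OF sos_Const]) auto
  finally show "putinar V S"
    unfolding putinar_iff_qmodule using \<open>M > 0\<close> by blast
qed

lemma square_bound_from_interval:
  assumes "T > 0" "v \<in> V" "finite S" "Var v \<in> S" "Const T - Var v \<in> S"
  shows "Const (T * T) - Var v * Var v \<in> qmodule V S"
proof -
  define t where "t = Var v"
  define c where "c = Const T"
  define r where "r = Const (sqrt (1 / T))"
  have rrc: "r * r * c = 1"
    unfolding r_def c_def using assms(1) by (simp flip: Const_mult)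
  \<comment> \<open>\<open>(c - t) * t\<close> is a product of two generators, but
    \<open>c * ((c - t) * t) = t\<^sup>2 * (c - t) + (c - t)\<^sup>2 * t\<close>\<close>
  have "(r * t) * (r * t) * (c - t) + (r * (c - t)) * (r * (c - t)) * t = (r * r * c) * ((c - t) * t)"
    by (simp add: algebra_simps)
  then have identity:
    "c * c - t * t = c * (c - t) + (r * t) * (r * t) * (c - t) + (r * (c - t)) * (r * (c - t)) * t"
    unfolding rrc by (simp add: algebra_simps)
  have t: "t \<in> polys_in V"
    unfolding t_def using assms(2) by (rule polys_in_Var)
  have "c * (c - t) \<in> qmodule V S"
    unfolding c_def t_def using assms by (intro generator_in_qmodule sos_Const) auto
  moreover have "(r * t) * (r * t) * (c - t) \<in> qmodule V S"
    using assms t unfolding c_def t_def r_def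
    by (intro generator_in_qmodule sos_square polys_in_mult polys_in_Const) auto
  moreover have "(r * (c - t)) * (r * (c - t)) * t \<in> qmodule V S"
    using assms t unfolding c_def t_def r_def
    by (intro generator_in_qmodule sos_square polys_in_mult polys_in_diff polys_in_Const) auto
  ultimately have "c * c - t * t \<in> qmodule V S"
    unfolding identity by (intro qmodule_add)
  then show ?thesis
    unfolding c_def t_def by (simp add: Const_mult)
qed

lemma re_var_in_x_vars:
  "i \<le> j \<Longrightarrow> j < n \<Longrightarrow> \<not> (i = n - 1 \<and> j = n - 1) \<Longrightarrow> re_var n i j \<in> x_vars n"
  unfolding x_vars_def by blast

lemma im_var_in_x_vars: "i < j \<Longrightarrow> j < n \<Longrightarrow> im_var n i j \<in> x_vars n"
  unfolding x_vars_def by blast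

lemma sos_diagonal_minus_square:
  assumes "i < n - 1"
  shows "sos (x_vars n) ((\<Sum>k<n - 1. (Var (re_var n k k))\<^sup>2) - (Var (re_var n i i))\<^sup>2)"
  using assms unfolding power2_eq_square
  by (intro sos_sum_minus_term sos_square polys_in_Var re_var_in_x_vars) auto

lemma sos_off_diagonal_minus_square:
  assumes "i < j" "j < n" "w = re_var n i j \<or> w = im_var n i j"
  shows "sos (x_vars n)
    ((\<Sum>l<n. \<Sum>k<l. (Var (re_var n k l))\<^sup>2 + (Var (im_var n k l))\<^sup>2) - (Var w)\<^sup>2)"
proof -
  define h where "h k l = (Var (re_var n k l))\<^sup>2 + (Var (im_var n k l))\<^sup>2" for k l
  have h: "sos (x_vars n) (h k l)" if "k < l" "l < n" for k l
    using that unfolding h_def power2_eq_square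
    by (intro sos_add sos_square polys_in_Var re_var_in_x_vars im_var_in_x_vars) auto
  have "sos (x_vars n) ((\<Sum>l<n. \<Sum>k<l. h k l) - (\<Sum>k<j. h k j))"
    using assms(2) h by (intro sos_sum_minus_term sos_sum) auto
  moreover have "sos (x_vars n) ((\<Sum>k<j. h k j) - h i j)"
    using assms(1,2) h by (intro sos_sum_minus_term) auto
  moreover have "sos (x_vars n) (h i j - (Var w)\<^sup>2)"
    using assms unfolding h_def power2_eq_square
    by (auto intro!: sos_square polys_in_Var re_var_in_x_vars im_var_in_x_vars)
  moreover have "(\<Sum>l<n. \<Sum>k<l. h k l) - (Var w)\<^sup>2
      = ((\<Sum>l<n. \<Sum>k<l. h k l) - (\<Sum>k<j. h k j)) + ((\<Sum>k<j. h k j) - h i j) + (h i j - (Var w)\<^sup>2)"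
    by simp
  ultimately show ?thesis
    unfolding h_def[symmetric] by (simp only: sos_add)
qed

lemma sos_trace_sq_minus_square:
  assumes "v \<in> x_vars n"
  shows "sos (x_vars n) (trace_sq n - Var v * Var v)"
proof -
  define A where "A = 1 - (\<Sum>i<n - 1. Var (re_var n i i))"
  define D where "D = (\<Sum>i<n - 1. (Var (re_var n i i))\<^sup>2)"
  define Off where "Off = (\<Sum>j<n. \<Sum>i<j. (Var (re_var n i j))\<^sup>2 + (Var (im_var n i j))\<^sup>2)"
  have A: "A \<in> polys_in (x_vars n)"
    unfolding A_def
    by (intro polys_in_diff polys_in_sum polys_in_Var re_var_in_x_vars)
      (auto simp flip: Const_one intro: polys_in_Const)
  have D: "sos (x_vars n) D" and Off: "sos (x_vars n) Off"
    unfolding D_def Off_def power2_eq_square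
    by (intro sos_sum sos_add sos_square polys_in_Var re_var_in_x_vars im_var_in_x_vars; simp)+
  consider (diagonal) i where "v = re_var n i i" "i < n - 1"
    | (off_diagonal) i j where "v = re_var n i j \<or> v = im_var n i j" "i < j" "j < n"
  proof -
    from assms consider
      (re) i j where "v = re_var n i j" "i \<le> j" "j < n" "\<not> (i = n - 1 \<and> j = n - 1)"
    | (im) i j where "v = im_var n i j" "i < j" "j < n"
      unfolding x_vars_def by blast
    then show thesis
    proof cases
      case (re i j)
      show thesis
      proof (cases "i = j")
        case True
        with re show thesis
          by (intro that(1)[of i]) auto
      next
        case False
        with re show thesis
          by (intro that(2)[of i j]) auto
      qed
    next
      case (im i j)
      then show thesis
        by (intro that(2)[of i j]) auto
    qed
  qed
  then have "sos (x_vars n) (D + Off + Off - (Var v)\<^sup>2)"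
  proof cases
    case diagonal
    then have "sos (x_vars n) (D - (Var v)\<^sup>2)"
      using sos_diagonal_minus_square[of i n] unfolding D_def by simp
    from sos_add[OF this sos_add[OF Off Off]] show ?thesis
      by (simp add: algebra_simps)
  next
    case off_diagonal
    then have "sos (x_vars n) (Off - (Var v)\<^sup>2)"
      unfolding Off_def by (simp add: sos_off_diagonal_minus_square)
    from sos_add[OF sos_add[OF D Off] this] show ?thesis
      by (simp add: algebra_simps)
  qed
  moreover have "trace_sq n = A * A + (D + Off + Off)"
    unfolding trace_sq_def A_def D_def Off_def power2_eq_square mult_2 by (simp only: add.assoc)
  then have "trace_sq n - Var v * Var v = A * A + (D + Off + Off - (Var v)\<^sup>2)"
    by (simp only: power2_eq_square add_diff_eq)
  ultimately show ?thesis
    using sos_add[OF sos_square[OF A]] by simp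
qed

lemma square_bound_from_purity:
  assumes "x_vars n \<subseteq> V" "finite S" "B_set n \<subseteq> S" "v \<in> x_vars n"
  shows "Const 1 - Var v * Var v \<in> qmodule V S"
proof -
  have "sos V 1"
    using sos_Const[of 1 V] by simp
  then have "1 * (1 - trace_sq n) \<in> qmodule V S"
    using assms(3) by (intro generator_in_qmodule assms(2)) (auto simp: B_set_def)
  moreover have "trace_sq n - Var v * Var v \<in> qmodule V S"
    using sos_trace_sq_minus_square[OF assms(4)] by (intro sos_in_qmodule sos_mono[OF assms(1)])
  moreover have "Const 1 - Var v * Var v = 1 * (1 - trace_sq n) + (trace_sq n - Var v * Var v)"
    by simp
  ultimately show ?thesis
    by (simp only: qmodule_add)
qed

lemma finite_x_vars: "finite (x_vars n)"
proof -
  have "x_vars n \<subseteq> (\<lambda>(i, j). 1 + i * n + j) ` ({..<n} \<times> {..<n})"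
  proof
    fix v assume "v \<in> x_vars n"
    then consider (re) i j where "v = re_var n i j" "i \<le> j" "j < n"
      | (im) i j where "v = im_var n i j" "i < j" "j < n"
      unfolding x_vars_def by blast
    then show "v \<in> (\<lambda>(i, j). 1 + i * n + j) ` ({..<n} \<times> {..<n})"
    proof cases
      case (re i j)
      then show ?thesis
        by (intro rev_image_eqI[of "(i, j)"]) (simp_all add: re_var_def)
    next
      case (im i j)
      then show ?thesis
        by (intro rev_image_eqI[of "(j, i)"]) (simp_all add: im_var_def)
    qed
  qed
  then show ?thesis
    by (rule finite_subset) auto
qed

lemma square_bound_from_putinar:
  assumes "putinar W S\<^sub>0" "finite W" "v \<in> W" "W \<subseteq> V" "S\<^sub>0 \<subseteq> S" "finite S"
  shows "\<exists>c. Const c - Var v * Var v \<in> qmodule V S"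
  using assms(1,3) qmodule_mono[OF assms(4-6)] putinar_iff_vars_bounded[OF assms(2)] by blast

theorem lemma4:
  fixes n K :: nat and T :: real and U :: "mpoly set"
  assumes "n \<ge> 1" and "T > 0" and "K \<ge> 1"
    and "finite U" and "U \<subseteq> polys_in (u_vars n K)"
    and "compact {a :: nat \<Rightarrow> real. (\<forall>v. v \<notin> u_vars n K \<longrightarrow> a v = 0) \<and> (\<forall>q\<in>U. peval q a \<ge> 0)}"
    and "putinar (u_vars n K) U"
  shows "putinar (all_vars n K) (T_set T \<union> B_set n \<union> U)"
proof -
  let ?V = "all_vars n K" and ?S = "T_set T \<union> B_set n \<union> U"
  have fin: "finite ?V" "finite ?S" "finite (u_vars n K)"
    using assms(4) finite_x_vars by (simp_all add: all_vars_def u_vars_def T_set_def B_set_def)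
  show ?thesis
  proof (rule putinar_iff_vars_bounded[OF fin(1), THEN iffD2], rule ballI)
    fix v assume "v \<in> ?V"
    then consider "v = t_var" | "v \<in> x_vars n" | "v \<in> u_vars n K"
      unfolding all_vars_def by blast
    then show "\<exists>c. Const c - Var v * Var v \<in> qmodule ?V ?S"
    proof cases
      case 1
      have "Const (T * T) - Var v * Var v \<in> qmodule ?V ?S"
        using 1 by (intro square_bound_from_interval assms(2) fin(2)) (auto simp: all_vars_def T_set_def)
      then show ?thesis ..
    next
      case 2
      have "Const 1 - Var v * Var v \<in> qmodule ?V ?S"
        by (rule square_bound_from_purity[OF _ fin(2) _ 2]) (auto simp: all_vars_def)
      then show ?thesis ..
    next
      case 3
      show ?thesis
        by (rule square_bound_from_putinar[OF assms(7) fin(3) 3 _ _ fin(2)]) (auto simp: all_vars_def)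
    qed
  qed
qed

end
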